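(* Let $l\geq 1$ and $m\geq 1$ be integers. Then for each of the following five choices of $(d_1,d_2,\beta)$ there is a constant $C>0$ such that for all distribution functions $F$ and $G$ of probability distributions supported on $\mathbb{Z}$, \[ d_1(\bar F^m,\bar G^m)\leq C\, d_2(F,G)^{1-\beta}\,\bigl(\|\Delta^{l+1}\bar F^m\|_1+\|\Delta^{l+1}\bar G^m\|_1\bigr)^{\beta}: \] (i) $d_1=d_{\mathrm{loc}}$, $d_2=d_{\mathrm{TV}}$, $\beta=1/l$; (ii) $d_1=d_{\mathrm{loc}}$, $d_2=d_{\mathrm{K}}$, $\beta=1/l$; (iii) $d_1=d_{\mathrm{loc}}$, $d_2=d_{\mathrm{W}}$, $\beta=2/(l+1)$; (iv) $d_1=d_{\mathrm{TV}}$, $d_2=d_{\mathrm{W}}$, $\beta=1/(l+1)$; (v) $d_1=d_{\mathrm{K}}$, $d_2=d_{\mathrm{W}}$, $\beta=1/(l+1)$.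
   Context: For $f:\mathbb{Z}\to\mathbb{R}$, $\|f\|_p=(\sum_{i\in\mathbb{Z}}|f(i)|^p)^{1/p}$ for $1\le p<\infty$ and $\|f\|_\infty=\sup_{i\in\mathbb{Z}}|f(i)|$. Difference operators: $\Delta^0 f(k)=f(k)$, $\Delta^{n+1}f(k)=\Delta^n f(k+1)-\Delta^n f(k)$; write $\Delta=\Delta^1$. The distribution function of an integer-supported distribution is $F(j)=\mathbb{P}[X\le j]$, $j\in\mathbb{Z}$. For a positive integer $m$, $\bar F^m(j)=\frac{F(j)+F(j-1)+\dots+F(j-m+1)}{m}$ (so $\bar F^1=F$). For functions $F,G$ on $\mathbb{Z}$: $d_{\mathrm{K}}(F,G)=\|F-G\|_\infty$, $d_{\mathrm{W}}(F,G)=\|F-G\|_1$, $d_{\mathrm{loc}}(F,G)=\|\Delta F-\Delta G\|_\infty$, $d_{\mathrm{TV}}(F,G)=\frac12\|\Delta F-\Delta G\|_1$. *)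

theory Defs
  imports "HOL-Probability.Probability"
begin

definition lnorm1 :: "(int \<Rightarrow> real) \<Rightarrow> real" where
  "lnorm1 f = (\<Sum>\<^sub>\<infinity>i\<in>UNIV. \<bar>f i\<bar>)"

definition lnorminf :: "(int \<Rightarrow> real) \<Rightarrow> real" where
  "lnorminf f = (SUP i. \<bar>f i\<bar>)"

fun Delta :: "nat \<Rightarrow> (int \<Rightarrow> real) \<Rightarrow> int \<Rightarrow> real" where
  "Delta 0 f k = f k"
| "Delta (Suc n) f k = Delta n f (k + 1) - Delta n f k"

definition distfun :: "int pmf \<Rightarrow> int \<Rightarrow> real" where
  "distfun p j = measure_pmf.prob p {..j}"

definition Fbar :: "nat \<Rightarrow> (int \<Rightarrow> real) \<Rightarrow> int \<Rightarrow> real" where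
  "Fbar m F j = (\<Sum>i<m. F (j - int i)) / real m"

definition dK :: "(int \<Rightarrow> real) \<Rightarrow> (int \<Rightarrow> real) \<Rightarrow> real" where
  "dK F G = lnorminf (\<lambda>i. F i - G i)"

definition dW :: "(int \<Rightarrow> real) \<Rightarrow> (int \<Rightarrow> real) \<Rightarrow> real" where
  "dW F G = lnorm1 (\<lambda>i. F i - G i)"

definition dloc :: "(int \<Rightarrow> real) \<Rightarrow> (int \<Rightarrow> real) \<Rightarrow> real" where
  "dloc F G = lnorminf (\<lambda>i. Delta 1 F i - Delta 1 G i)"

definition dTV :: "(int \<Rightarrow> real) \<Rightarrow> (int \<Rightarrow> real) \<Rightarrow> real" where
  "dTV F G = lnorm1 (\<lambda>i. Delta 1 F i - Delta 1 G i) / 2"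

definition smooth :: "nat \<Rightarrow> nat \<Rightarrow> (int \<Rightarrow> real) \<Rightarrow> (int \<Rightarrow> real) \<Rightarrow> real" where
  "smooth l m F G = lnorm1 (Delta (l+1) (Fbar m F)) + lnorm1 (Delta (l+1) (Fbar m G))"

end

theory Submission
  imports Defs "HOL-Computational_Algebra.Polynomial"
begin

text \<open>Let E be the shift \<open>(E u) k = u (k + 1)\<close>, so that \<open>\<Delta> = E - 1\<close>, and let
  \<open>A = (1 + E + \<dots> + E^(n - 1)) / n\<close> be the averaging operator of length n.
  Then \<open>1 - A = \<Delta> P\<close> for a polynomial P in E whose coefficients have absolute sum at
  most n, and the identity \<open>1 = R A + (1 - A)^r\<close>, R being the truncated Neumann series of
  \<open>1 / A\<close> (coefficient sum at most \<open>2^r\<close>), splits every sequence as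
  \<open>u = R A u + P^r \<Delta>^r u\<close>. Averaging gains a factor \<open>1 / n\<close> against the \<open>\<ell>\<^sub>1\<close> norm of u,
  or against the sup norm of v if \<open>u = \<Delta> v\<close>, and \<open>A^2 \<Delta> v\<close> gains \<open>1 / n^2\<close> against the
  \<open>\<ell>\<^sub>1\<close> norm of v; the term \<open>P^r \<Delta>^r u\<close> costs at most a factor \<open>n^r\<close>. Hence
  \<open>U \<le> a X / n^s + b n^(k - s) Y\<close> for every n, and choosing \<open>n \<approx> (X / Y)^(1 / k)\<close> gives
  \<open>U \<le> C X^(1 - s / k) Y^(s / k)\<close>. For the five inequalities, U is the distance of the averaged
  distribution functions, X the distance of F and G, and Y the smoothness term.\<close>


section \<open>Polynomials in the shift operator\<close>

text \<open>\<open>shift_op P\<close> is the operator \<open>P(E)\<close>.\<close>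

definition shift_op :: "real poly \<Rightarrow> (int \<Rightarrow> real) \<Rightarrow> int \<Rightarrow> real" where
  "shift_op P u k = (\<Sum>i\<le>degree P. coeff P i * u (k + int i))"

lemma shift_op_atMost:
  "degree P \<le> N \<Longrightarrow> shift_op P u k = (\<Sum>i\<le>N. coeff P i * u (k + int i))"
  unfolding shift_op_def by (rule sum.mono_neutral_left) (auto simp: coeff_eq_0)

lemma shift_op_0 [simp]: "shift_op 0 u = (\<lambda>_. 0)"
  by (simp add: shift_op_def fun_eq_iff)

lemma shift_op_1 [simp]: "shift_op 1 u k = u k"
  by (simp add: shift_op_def)

lemma shift_op_pCons: "shift_op (pCons a P) u k = a * u k + shift_op P u (k + 1)"
proof -
  have "shift_op (pCons a P) u k
      = (\<Sum>i\<le>Suc (degree P). coeff (pCons a P) i * u (k + int i))"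
    by (rule shift_op_atMost) (rule degree_pCons_le)
  also have "\<dots> = a * u k + (\<Sum>i\<le>degree P. coeff P i * u (k + 1 + int i))"
    by (subst sum.atMost_Suc_shift) (simp add: algebra_simps)
  finally show ?thesis by (simp add: shift_op_def)
qed

lemma shift_op_add: "shift_op (P + Q) u k = shift_op P u k + shift_op Q u k"
proof -
  define N where "N = max (degree P) (degree Q)"
  have "degree (P + Q) \<le> N" unfolding N_def by (rule degree_add_le) auto
  then show ?thesis
    by (simp add: shift_op_atMost[of _ N] N_def algebra_simps sum.distrib)
qed

lemma shift_op_smult: "shift_op (smult c P) u k = c * shift_op P u k"
  by (simp add: shift_op_atMost[OF degree_smult_le] shift_op_def sum_distrib_left mult.assoc)

lemma shift_op_mult: "shift_op (P * Q) u k = shift_op P (shift_op Q u) k"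
  by (induction P arbitrary: k) (simp_all add: shift_op_add shift_op_smult shift_op_pCons)

lemma shift_op_sum:
  "finite A \<Longrightarrow> shift_op (\<Sum>a\<in>A. f a) u k = (\<Sum>a\<in>A. shift_op (f a) u k)"
  by (induction A rule: finite_induct) (auto simp: shift_op_add)

lemma shift_op_monom: "shift_op (monom c j) u k = c * u (k + int j)"
proof -
  have "shift_op (monom c j) u k = (\<Sum>i\<le>j. coeff (monom c j) i * u (k + int i))"
    by (rule shift_op_atMost) (rule degree_monom_le)
  also have "\<dots> = (\<Sum>i\<le>j. if j = i then c * u (k + int j) else 0)"
    by (intro sum.cong) auto
  finally show ?thesis by simp
qed

abbreviation diff_poly :: "real poly" where
  "diff_poly \<equiv> [:-1, 1:]"

lemma shift_op_diff_poly_power: "shift_op (diff_poly ^ n) u = Delta n u"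
proof (induction n)
  case (Suc n)
  show ?case
    by (rule ext) (simp only: power_Suc shift_op_mult Suc shift_op_pCons Delta.simps; simp)
qed (simp add: fun_eq_iff)

definition coeff_l1 :: "real poly \<Rightarrow> real" where
  "coeff_l1 P = (\<Sum>i\<le>degree P. \<bar>coeff P i\<bar>)"

lemma coeff_l1_atMost: "degree P \<le> N \<Longrightarrow> coeff_l1 P = (\<Sum>i\<le>N. \<bar>coeff P i\<bar>)"
  unfolding coeff_l1_def by (rule sum.mono_neutral_left) (auto simp: coeff_eq_0)

lemma coeff_l1_nonneg: "coeff_l1 P \<ge> 0"
  unfolding coeff_l1_def by (intro sum_nonneg) auto

lemma coeff_l1_0 [simp]: "coeff_l1 0 = 0"
  and coeff_l1_1 [simp]: "coeff_l1 1 = 1"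
  by (simp_all add: coeff_l1_def)

lemma coeff_l1_pCons: "coeff_l1 (pCons a P) = \<bar>a\<bar> + coeff_l1 P"
proof -
  have "coeff_l1 (pCons a P) = (\<Sum>i\<le>Suc (degree P). \<bar>coeff (pCons a P) i\<bar>)"
    by (rule coeff_l1_atMost) (rule degree_pCons_le)
  then show ?thesis by (subst (asm) sum.atMost_Suc_shift) (simp add: coeff_l1_def)
qed

lemma coeff_l1_add: "coeff_l1 (P + Q) \<le> coeff_l1 P + coeff_l1 Q"
proof -
  define N where "N = max (degree P) (degree Q)"
  have "degree (P + Q) \<le> N" unfolding N_def by (rule degree_add_le) auto
  then have "coeff_l1 (P + Q) = (\<Sum>i\<le>N. \<bar>coeff P i + coeff Q i\<bar>)"
    by (simp add: coeff_l1_atMost)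
  also have "\<dots> \<le> (\<Sum>i\<le>N. \<bar>coeff P i\<bar> + \<bar>coeff Q i\<bar>)"
    by (intro sum_mono abs_triangle_ineq)
  also have "\<dots> = coeff_l1 P + coeff_l1 Q"
    by (simp add: sum.distrib coeff_l1_atMost[of _ N] N_def)
  finally show ?thesis .
qed

lemma coeff_l1_smult: "coeff_l1 (smult c P) = \<bar>c\<bar> * coeff_l1 P"
  by (simp add: coeff_l1_atMost[OF degree_smult_le] coeff_l1_def sum_distrib_left abs_mult)

lemma coeff_l1_uminus [simp]: "coeff_l1 (- P) = coeff_l1 P"
  using coeff_l1_smult[of "-1" P] by simp

lemma coeff_l1_diff: "coeff_l1 (P - Q) \<le> coeff_l1 P + coeff_l1 Q"
  using coeff_l1_add[of P "-Q"] by simp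

lemma coeff_l1_mult: "coeff_l1 (P * Q) \<le> coeff_l1 P * coeff_l1 Q"
proof (induction P)
  case (pCons a P)
  have "coeff_l1 (pCons a P * Q) \<le> coeff_l1 (smult a Q) + coeff_l1 (pCons 0 (P * Q))"
    by (simp add: coeff_l1_add)
  also have "\<dots> \<le> \<bar>a\<bar> * coeff_l1 Q + coeff_l1 P * coeff_l1 Q"
    using pCons.IH by (simp add: coeff_l1_smult coeff_l1_pCons)
  finally show ?case by (simp add: coeff_l1_pCons algebra_simps)
qed simp

lemma coeff_l1_power: "coeff_l1 (P ^ n) \<le> coeff_l1 P ^ n"
proof (induction n)
  case (Suc n)
  have "coeff_l1 (P ^ Suc n) \<le> coeff_l1 P * coeff_l1 (P ^ n)" by (simp add: coeff_l1_mult)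
  also have "\<dots> \<le> coeff_l1 P * coeff_l1 P ^ n"
    using Suc by (simp add: mult_left_mono coeff_l1_nonneg)
  finally show ?case by simp
qed simp

lemma coeff_l1_sum: "finite A \<Longrightarrow> coeff_l1 (\<Sum>a\<in>A. f a) \<le> (\<Sum>a\<in>A. coeff_l1 (f a))"
  by (induction A rule: finite_induct) (auto intro: order_trans[OF coeff_l1_add])

lemma coeff_l1_monom: "coeff_l1 (monom c j) = \<bar>c\<bar>"
proof -
  have "coeff_l1 (monom c j) = (\<Sum>i\<le>j. \<bar>coeff (monom c j) i\<bar>)"
    by (rule coeff_l1_atMost) (rule degree_monom_le)
  also have "\<dots> = (\<Sum>i\<le>j. if j = i then \<bar>c\<bar> else 0)"
    by (intro sum.cong) auto
  finally show ?thesis by simp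
qed

lemma abs_coeff_mult_le:
  assumes "\<And>i. \<bar>coeff P i\<bar> \<le> c"
  shows "\<bar>coeff (P * Q) n\<bar> \<le> c * coeff_l1 Q"
proof (induction Q arbitrary: n)
  case (pCons b Q)
  have c: "c \<ge> 0" using assms[of 0] by linarith
  have shifted: "\<bar>coeff (pCons 0 (P * Q)) n\<bar> \<le> c * coeff_l1 Q"
    using pCons.IH c coeff_l1_nonneg[of Q] by (cases n) auto
  have "\<bar>coeff (P * pCons b Q) n\<bar> \<le> \<bar>b\<bar> * \<bar>coeff P n\<bar> + \<bar>coeff (pCons 0 (P * Q)) n\<bar>"
    by (simp add: abs_mult[symmetric] abs_triangle_ineq)
  also have "\<dots> \<le> \<bar>b\<bar> * c + c * coeff_l1 Q"
    by (intro add_mono mult_left_mono assms shifted) auto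
  finally show ?case by (simp add: coeff_l1_pCons algebra_simps)
qed simp

lemma abs_coeff_power_le:
  assumes "r \<ge> 1" "\<And>i. \<bar>coeff P i\<bar> \<le> c"
  shows "\<bar>coeff (P ^ r) j\<bar> \<le> c * coeff_l1 P ^ (r - 1)"
proof -
  obtain r' where r: "r = Suc r'" using assms(1) by (cases r) auto
  have "\<bar>coeff (P * P ^ r') j\<bar> \<le> c * coeff_l1 (P ^ r')" by (rule abs_coeff_mult_le[OF assms(2)])
  also have "\<dots> \<le> c * coeff_l1 P ^ r'"
    using coeff_l1_power[of P r'] assms(2)[of 0] by (intro mult_left_mono) auto
  finally show ?thesis using r by simp
qed


section \<open>Summable sequences on the integers\<close>

text \<open>For real sequences summability on \<open>UNIV\<close> is absolute summability; \<open>lnorm1\<close>, an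
  infinite sum, takes the junk value 0 on non-summable sequences.\<close>

lemma abs_summable_on_real_iff:
  fixes u :: "'a \<Rightarrow> real"
  shows "(\<lambda>k. \<bar>u k\<bar>) summable_on A \<longleftrightarrow> u summable_on A"
  using summable_on_iff_abs_summable_on_real[of u A] unfolding real_norm_def by (rule sym)

lemma lnorm1_nonneg: "lnorm1 u \<ge> 0"
  unfolding lnorm1_def by (rule infsum_nonneg) auto

lemma bij_betw_add_int: "bij_betw (\<lambda>k::int. k + c) UNIV UNIV"
  by (rule bij_betwI[of _ _ _ "\<lambda>k. k - c"]) auto

lemma summable_on_shift_int:
  "u summable_on UNIV \<Longrightarrow> (\<lambda>k::int. u (k + c)) summable_on UNIV"
  using summable_on_reindex_bij_betw[OF bij_betw_add_int[of c], of u] by simp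

lemma lnorm1_shift: "lnorm1 (\<lambda>k. u (k + c)) = lnorm1 u"
  using infsum_reindex_bij_betw[OF bij_betw_add_int[of c], of "\<lambda>k. \<bar>u k\<bar>"]
  by (simp add: lnorm1_def)

lemma summable_on_diff:
  fixes u v :: "'a \<Rightarrow> real"
  shows "u summable_on A \<Longrightarrow> v summable_on A \<Longrightarrow> (\<lambda>k. u k - v k) summable_on A"
  using summable_on_add[of u A "\<lambda>k. - v k"] summable_on_uminus[of v A] by simp

lemma lnorm1_add_le:
  assumes "u summable_on UNIV" "v summable_on UNIV"
  shows "lnorm1 (\<lambda>k. u k + v k) \<le> lnorm1 u + lnorm1 v"
proof -
  have abs: "(\<lambda>k. \<bar>u k\<bar>) summable_on UNIV" "(\<lambda>k. \<bar>v k\<bar>) summable_on UNIV"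
    "(\<lambda>k. \<bar>u k + v k\<bar>) summable_on UNIV"
    using assms summable_on_add[OF assms] by (simp_all add: abs_summable_on_real_iff)
  have "lnorm1 (\<lambda>k. u k + v k) \<le> (\<Sum>\<^sub>\<infinity>k. \<bar>u k\<bar> + \<bar>v k\<bar>)"
    unfolding lnorm1_def
    using abs summable_on_add[OF abs(1,2)] by (intro infsum_mono abs_triangle_ineq)
  also have "\<dots> = lnorm1 u + lnorm1 v"
    unfolding lnorm1_def using abs by (intro infsum_add)
  finally show ?thesis .
qed

lemma lnorm1_cmult: "lnorm1 (\<lambda>k. c * u k) = \<bar>c\<bar> * lnorm1 u"
proof (cases "(\<lambda>k. \<bar>u k\<bar>) summable_on UNIV")
  case True
  then show ?thesis by (simp add: lnorm1_def abs_mult infsum_cmult_right)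
next
  case False
  then have "c = 0 \<or> \<not> (\<lambda>k. \<bar>c * u k\<bar>) summable_on UNIV"
    using summable_on_cmult_right[of "\<lambda>k. \<bar>c * u k\<bar>" UNIV "1 / \<bar>c\<bar>"]
    by (auto simp: abs_mult)
  with False show ?thesis by (auto simp: lnorm1_def infsum_not_exists)
qed

lemma lnorm1_diff_le:
  assumes "u summable_on UNIV" "v summable_on UNIV"
  shows "lnorm1 (\<lambda>k. u k - v k) \<le> lnorm1 u + lnorm1 v"
  using lnorm1_add_le[of u "\<lambda>k. - v k"] lnorm1_cmult[of "-1" v] summable_on_uminus[of v] assms
  by simp

lemma sum_abs_le_lnorm1:
  assumes "u summable_on UNIV" "finite A" "inj_on g A"
  shows "(\<Sum>a\<in>A. \<bar>u (g a)\<bar>) \<le> lnorm1 u"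
proof -
  have "(\<Sum>a\<in>A. \<bar>u (g a)\<bar>) = (\<Sum>i\<in>g ` A. \<bar>u i\<bar>)"
    using assms by (simp add: sum.reindex)
  also have "\<dots> \<le> lnorm1 u"
    unfolding lnorm1_def using assms
    by (intro finite_sum_le_infsum) (auto simp: abs_summable_on_real_iff)
  finally show ?thesis .
qed

lemma abs_le_lnorm1: "u summable_on UNIV \<Longrightarrow> \<bar>u k\<bar> \<le> lnorm1 u"
  using sum_abs_le_lnorm1[of u "{k}" id] by simp

lemma abs_sum_window_le_lnorm1:
  "u summable_on UNIV \<Longrightarrow> \<bar>\<Sum>i<n. u (j + int i)\<bar> \<le> lnorm1 u"
  by (rule order_trans[OF sum_abs sum_abs_le_lnorm1[of u "{..<n}" "\<lambda>i. j + int i"]])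
    (auto simp: inj_on_def)

lemma lnorminf_le: "(\<And>k. \<bar>u k\<bar> \<le> M) \<Longrightarrow> lnorminf u \<le> M"
  unfolding lnorminf_def by (rule cSUP_least) auto

lemma abs_le_lnorminf: "(\<And>k. \<bar>u k\<bar> \<le> M) \<Longrightarrow> \<bar>u k\<bar> \<le> lnorminf u"
  unfolding lnorminf_def
  by (rule cSUP_upper) (use bdd_aboveI2[of UNIV "\<lambda>i. \<bar>u i\<bar>" M] in auto)

lemma abs_shift_op_le_sup:
  assumes "\<And>j. \<bar>v j\<bar> \<le> M"
  shows "\<bar>shift_op P v k\<bar> \<le> coeff_l1 P * M"
proof (induction P arbitrary: k)
  case (pCons a P)
  have "\<bar>shift_op (pCons a P) v k\<bar> \<le> \<bar>a\<bar> * \<bar>v k\<bar> + \<bar>shift_op P v (k + 1)\<bar>"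
    by (simp add: shift_op_pCons abs_mult[symmetric] abs_triangle_ineq)
  also have "\<dots> \<le> \<bar>a\<bar> * M + coeff_l1 P * M"
    using pCons.IH[of "k + 1"] assms[of k] by (intro add_mono mult_left_mono) auto
  finally show ?case by (simp add: coeff_l1_pCons algebra_simps)
qed simp

lemma abs_shift_op_le_lnorm1:
  assumes "\<And>i. \<bar>coeff P i\<bar> \<le> c" "v summable_on UNIV"
  shows "\<bar>shift_op P v k\<bar> \<le> c * lnorm1 v"
proof -
  have "\<bar>shift_op P v k\<bar> \<le> (\<Sum>i\<le>degree P. \<bar>coeff P i\<bar> * \<bar>v (k + int i)\<bar>)"
    unfolding shift_op_def abs_mult[symmetric] by (rule sum_abs)
  also have "\<dots> \<le> (\<Sum>i\<le>degree P. c * \<bar>v (k + int i)\<bar>)"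
    by (intro sum_mono mult_right_mono assms(1)) auto
  also have "\<dots> \<le> c * lnorm1 v"
    unfolding sum_distrib_left[symmetric] using assms(1)[of 0]
    by (intro mult_left_mono sum_abs_le_lnorm1[OF assms(2)]) (auto simp: inj_on_def)
  finally show ?thesis .
qed

lemma summable_shift_op:
  assumes "v summable_on UNIV"
  shows "shift_op P v summable_on UNIV"
proof (induction P)
  case (pCons a P)
  have "shift_op (pCons a P) v = (\<lambda>k. a * v k + shift_op P v (k + 1))"
    by (rule ext) (rule shift_op_pCons)
  moreover have "(\<lambda>k. a * v k + shift_op P v (k + 1)) summable_on UNIV"
    using assms pCons.IH
    by (intro summable_on_add summable_on_cmult_right summable_on_shift_int)
  ultimately show ?case by simp
qed simp

lemma lnorm1_shift_op_le:
  assumes "v summable_on UNIV"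
  shows "lnorm1 (shift_op P v) \<le> coeff_l1 P * lnorm1 v"
proof (induction P)
  case (pCons a P)
  have "shift_op (pCons a P) v = (\<lambda>k. a * v k + shift_op P v (k + 1))"
    by (rule ext) (rule shift_op_pCons)
  then have "lnorm1 (shift_op (pCons a P) v) = lnorm1 (\<lambda>k. a * v k + shift_op P v (k + 1))"
    by simp
  also have "\<dots> \<le> lnorm1 (\<lambda>k. a * v k) + lnorm1 (\<lambda>k. shift_op P v (k + 1))"
    using assms summable_shift_op[OF assms]
    by (intro lnorm1_add_le summable_on_cmult_right summable_on_shift_int)
  also have "\<dots> \<le> \<bar>a\<bar> * lnorm1 v + coeff_l1 P * lnorm1 v"
    using pCons.IH by (simp add: lnorm1_cmult lnorm1_shift)
  finally show ?case by (simp add: coeff_l1_pCons algebra_simps)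
qed (simp add: lnorm1_def)

lemma summable_Delta: "u summable_on UNIV \<Longrightarrow> Delta n u summable_on UNIV"
  using summable_shift_op[of u "diff_poly ^ n"] by (simp add: shift_op_diff_poly_power)

lemma Delta_Delta_1: "Delta n (Delta 1 f) = Delta (Suc n) f"
proof (induction n)
  case (Suc n)
  show ?case by (rule ext) (simp only: Delta.simps(2) Suc)
qed (simp add: fun_eq_iff)

lemma Delta_diff: "Delta n (\<lambda>k. f k - g k) = (\<lambda>k. Delta n f k - Delta n g k)"
proof (rule ext)
  show "Delta n (\<lambda>k. f k - g k) k = Delta n f k - Delta n g k" for k
    by (induction n arbitrary: k) auto
qed


lemma lnorm1_Delta_le_twice:
  assumes "w summable_on UNIV"
  shows "lnorm1 (Delta 1 w) \<le> 2 * lnorm1 w"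
proof -
  have "Delta 1 w = (\<lambda>k. w (k + 1) - w k)" by (simp add: fun_eq_iff)
  then show ?thesis
    using lnorm1_diff_le[OF summable_on_shift_int[OF assms] assms] by (simp add: lnorm1_shift)
qed

section \<open>Averaging and the Neumann decomposition\<close>

definition geom_poly :: "nat \<Rightarrow> real poly" where
  "geom_poly n = (\<Sum>j<n. monom 1 j)"

lemma coeff_geom_poly: "coeff (geom_poly n) j = (if j < n then 1 else 0)"
  by (simp add: geom_poly_def coeff_sum)

lemma coeff_l1_geom_poly: "coeff_l1 (geom_poly n) \<le> real n"
  using coeff_l1_sum[of "{..<n}" "\<lambda>j. monom (1::real) j"]
  by (simp add: geom_poly_def coeff_l1_monom)

lemma diff_poly_mult_geom_poly: "diff_poly * geom_poly n = monom 1 n - 1"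
proof (induction n)
  case 0
  then show ?case by (simp add: geom_poly_def monom_0 one_pCons)
next
  case (Suc n)
  have "diff_poly * geom_poly (Suc n) = diff_poly * geom_poly n + diff_poly * monom 1 n"
    by (simp add: geom_poly_def distrib_left)
  also have "\<dots> = (monom 1 n - 1) + (monom 1 (Suc n) - monom 1 n)"
    by (simp only: Suc.IH) (simp add: monom_Suc)
  finally show ?case by (simp add: algebra_simps)
qed

definition avg_poly :: "nat \<Rightarrow> real poly" where
  "avg_poly n = smult (1 / real n) (geom_poly n)"

lemma abs_coeff_avg_poly: "\<bar>coeff (avg_poly n) j\<bar> \<le> 1 / real n"
  by (simp add: avg_poly_def coeff_geom_poly)

lemma coeff_l1_avg_poly: "coeff_l1 (avg_poly n) \<le> 1"
proof (cases "n = 0")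
  case False
  have "coeff_l1 (avg_poly n) = coeff_l1 (geom_poly n) / real n"
    by (simp add: avg_poly_def coeff_l1_smult)
  also have "\<dots> \<le> 1" using False coeff_l1_geom_poly[of n] by simp
  finally show ?thesis .
qed (simp add: avg_poly_def)

lemma shift_op_avg_poly: "shift_op (avg_poly n) v k = (\<Sum>i<n. v (k + int i)) / real n"
  by (simp add: avg_poly_def geom_poly_def shift_op_smult shift_op_sum shift_op_monom)

lemma shift_op_avg_poly_Delta:
  "shift_op (avg_poly n) (Delta 1 w) k = (w (k + int n) - w k) / real n"
proof -
  have "(\<Sum>i<n. Delta 1 w (k + int i)) = (\<Sum>i<n. w (k + int (Suc i)) - w (k + int i))"
    by (intro sum.cong) (auto simp: algebra_simps)
  also have "\<dots> = w (k + int n) - w k"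
    by (subst sum_lessThan_telescope) simp
  finally show ?thesis by (simp add: shift_op_avg_poly)
qed

lemma abs_shift_op_avg_poly_le:
  "v summable_on UNIV \<Longrightarrow> \<bar>shift_op (avg_poly n) v k\<bar> \<le> lnorm1 v / real n"
  using abs_shift_op_le_lnorm1[OF abs_coeff_avg_poly, of v n k] by simp

definition avg_antidiff_poly :: "nat \<Rightarrow> real poly" where
  "avg_antidiff_poly n = smult (-1 / real n) (\<Sum>i<n. geom_poly i)"

lemma abs_coeff_avg_antidiff_poly: "\<bar>coeff (avg_antidiff_poly n) j\<bar> \<le> 1"
proof -
  have "\<bar>coeff (avg_antidiff_poly n) j\<bar> = (\<Sum>i<n. if j < i then 1 else 0) / real n"
    by (simp add: avg_antidiff_poly_def coeff_sum coeff_geom_poly abs_mult sum_nonneg)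
  also have "\<dots> \<le> (\<Sum>i<n. 1) / real n"
    by (intro divide_right_mono sum_mono) auto
  finally show ?thesis by (cases "n = 0") simp_all
qed

lemma coeff_l1_avg_antidiff_poly: "coeff_l1 (avg_antidiff_poly n) \<le> real n"
proof -
  have "coeff_l1 (avg_antidiff_poly n) = coeff_l1 (\<Sum>i<n. geom_poly i) / real n"
    by (simp add: avg_antidiff_poly_def coeff_l1_smult)
  also have "\<dots> \<le> (\<Sum>i<n. coeff_l1 (geom_poly i)) / real n"
    by (intro divide_right_mono coeff_l1_sum) auto
  also have "\<dots> \<le> (\<Sum>i<n. real n) / real n"
    by (intro divide_right_mono sum_mono order_trans[OF coeff_l1_geom_poly]) auto
  finally show ?thesis by (cases "n = 0") simp_all
qed

lemma one_minus_avg_poly: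
  assumes "n \<ge> 1"
  shows "1 - avg_poly n = diff_poly * avg_antidiff_poly n"
proof -
  have "diff_poly * avg_antidiff_poly n = smult (-1 / real n) (\<Sum>i<n. diff_poly * geom_poly i)"
    by (simp add: avg_antidiff_poly_def sum_distrib_left)
  also have "\<dots> = smult (-1 / real n) (\<Sum>i<n. monom 1 i - 1)"
    by (simp only: diff_poly_mult_geom_poly)
  also have "\<dots> = smult (-1 / real n) (geom_poly n - of_nat n)"
    by (simp add: geom_poly_def sum_subtractf)
  also have "\<dots> = 1 - avg_poly n"
    using assms by (simp add: avg_poly_def poly_eq_iff of_nat_poly algebra_simps coeff_pCons
        split: nat.split)
  finally show ?thesis by simp
qed

definition neumann_poly :: "real poly \<Rightarrow> nat \<Rightarrow> real poly" where
  "neumann_poly B r = (\<Sum>j<r. (1 - B) ^ j)"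

lemma mult_neumann_poly: "B * neumann_poly B r = 1 - (1 - B) ^ r"
  by (induction r) (simp_all add: neumann_poly_def algebra_simps)

lemma coeff_l1_neumann_poly:
  assumes "coeff_l1 B \<le> 1"
  shows "coeff_l1 (neumann_poly B r) \<le> 2 ^ r"
proof -
  have "coeff_l1 (1 - B) \<le> 2" using coeff_l1_diff[of 1 B] assms by simp
  then have "coeff_l1 ((1 - B) ^ j) \<le> 2 ^ j" for j
    by (meson coeff_l1_nonneg coeff_l1_power order_trans power_mono)
  then have "coeff_l1 (neumann_poly B r) \<le> (\<Sum>j<r. 2 ^ j)"
    unfolding neumann_poly_def by (intro order_trans[OF coeff_l1_sum] sum_mono) auto
  also have "\<dots> \<le> 2 ^ r" by (induction r) auto
  finally show ?thesis .
qed

lemma shift_op_decomposition: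
  assumes "1 - B = diff_poly * P"
  shows "u k = shift_op (neumann_poly B r) (shift_op B u) k + shift_op (P ^ r) (Delta r u) k"
proof -
  have "(1 - B) ^ r = P ^ r * diff_poly ^ r"
    using assms by (metis power_mult_distrib mult.commute)
  then have "(1::real poly) = neumann_poly B r * B + P ^ r * diff_poly ^ r"
    using mult_neumann_poly[of B r] by (simp add: mult.commute)
  then have "shift_op 1 u k = shift_op (neumann_poly B r * B + P ^ r * diff_poly ^ r) u k"
    by simp
  then show ?thesis by (simp add: shift_op_add shift_op_mult shift_op_diff_poly_power)
qed

lemma abs_le_avg_poly_Delta:
  assumes r: "r \<ge> 1" and n: "n \<ge> 1" and Du: "Delta r u summable_on UNIV"
    and avg: "\<And>j. \<bar>shift_op (avg_poly n) u j\<bar> \<le> c"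
  shows "\<bar>u k\<bar> \<le> 2 ^ r * c + real n ^ (r - 1) * lnorm1 (Delta r u)"
proof -
  have "\<bar>shift_op (neumann_poly (avg_poly n) r) (shift_op (avg_poly n) u) k\<bar>
      \<le> coeff_l1 (neumann_poly (avg_poly n) r) * c"
    by (rule abs_shift_op_le_sup[OF avg])
  also have "\<dots> \<le> 2 ^ r * c"
    using coeff_l1_neumann_poly[OF coeff_l1_avg_poly] avg[of 0]
    by (intro mult_right_mono) auto
  finally have smooth_part: "\<bar>shift_op (neumann_poly (avg_poly n) r) (shift_op (avg_poly n) u) k\<bar>
      \<le> 2 ^ r * c" .
  have "\<bar>coeff (avg_antidiff_poly n ^ r) i\<bar> \<le> real n ^ (r - 1)" for i
    using abs_coeff_power_le[OF r abs_coeff_avg_antidiff_poly[of n], of i]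
      power_mono[OF coeff_l1_avg_antidiff_poly[of n] coeff_l1_nonneg, of "r - 1"] by simp
  then have rough_part: "\<bar>shift_op (avg_antidiff_poly n ^ r) (Delta r u) k\<bar>
      \<le> real n ^ (r - 1) * lnorm1 (Delta r u)"
    by (rule abs_shift_op_le_lnorm1[OF _ Du])
  show ?thesis
    using shift_op_decomposition[OF one_minus_avg_poly[OF n], of u k r]
      smooth_part rough_part by linarith
qed

lemma abs_le_avg_poly_sq_Delta:
  assumes r: "r \<ge> 1" and n: "n \<ge> 1" and Du: "Delta r u summable_on UNIV"
    and avg: "\<And>j. \<bar>shift_op (avg_poly n * avg_poly n) u j\<bar> \<le> c"
  shows "\<bar>u k\<bar> \<le> 2 ^ r * c + 2 ^ r * real n ^ (r - 1) * lnorm1 (Delta r u)"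
proof -
  define B where "B = avg_poly n * avg_poly n"
  define P where "P = avg_antidiff_poly n * (1 + avg_poly n)"
  have "1 - B = (1 - avg_poly n) * (1 + avg_poly n)"
    by (simp add: B_def algebra_simps)
  also have "\<dots> = diff_poly * P"
    by (simp only: one_minus_avg_poly[OF n] P_def mult.assoc)
  finally have decomp: "1 - B = diff_poly * P" .
  have B: "coeff_l1 B \<le> 1"
    using coeff_l1_mult[of "avg_poly n" "avg_poly n"] coeff_l1_avg_poly[of n]
      coeff_l1_nonneg[of "avg_poly n"] mult_le_one unfolding B_def by fastforce
  have one_plus: "coeff_l1 (1 + avg_poly n) \<le> 2"
    using coeff_l1_add[of 1 "avg_poly n"] coeff_l1_avg_poly[of n] by simp
  have "\<bar>shift_op (neumann_poly B r) (shift_op B u) k\<bar> \<le> coeff_l1 (neumann_poly B r) * c"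
    by (rule abs_shift_op_le_sup) (use avg in \<open>simp add: B_def\<close>)
  also have "\<dots> \<le> 2 ^ r * c"
    using coeff_l1_neumann_poly[OF B] avg[of 0] by (intro mult_right_mono) auto
  finally have smooth_part: "\<bar>shift_op (neumann_poly B r) (shift_op B u) k\<bar> \<le> 2 ^ r * c" .
  have coeff_P: "\<bar>coeff P i\<bar> \<le> 2" for i
    using abs_coeff_mult_le[OF abs_coeff_avg_antidiff_poly[of n], of "1 + avg_poly n" i] one_plus
    by (simp add: P_def)
  have "coeff_l1 P \<le> real n * 2"
    unfolding P_def using coeff_l1_avg_antidiff_poly[of n] one_plus
    by (intro order_trans[OF coeff_l1_mult] mult_mono) (auto simp: coeff_l1_nonneg)
  then have "\<bar>coeff (P ^ r) i\<bar> \<le> 2 * (2 * real n) ^ (r - 1)" for i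
    using abs_coeff_power_le[OF r coeff_P, of i]
      power_mono[OF _ coeff_l1_nonneg, of P "2 * real n" "r - 1"]
    by (simp add: mult.commute)
  also have "2 * (2 * real n) ^ (r - 1) = 2 ^ r * real n ^ (r - 1)"
    using r by (cases r) (auto simp: power_mult_distrib)
  finally have rough_part:
      "\<bar>shift_op (P ^ r) (Delta r u) k\<bar> \<le> 2 ^ r * real n ^ (r - 1) * lnorm1 (Delta r u)"
    by (rule abs_shift_op_le_lnorm1[OF _ Du])
  show ?thesis
    using shift_op_decomposition[OF decomp, of u k r] smooth_part rough_part by linarith
qed

lemma lnorm1_le_avg_poly_Delta:
  assumes n: "n \<ge> 1" and u: "u summable_on UNIV"
  shows "lnorm1 u \<le> 2 ^ r * lnorm1 (shift_op (avg_poly n) u) + real n ^ r * lnorm1 (Delta r u)"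
proof -
  let ?smooth = "shift_op (neumann_poly (avg_poly n) r) (shift_op (avg_poly n) u)"
  let ?rough = "shift_op (avg_antidiff_poly n ^ r) (Delta r u)"
  have "u = (\<lambda>k. ?smooth k + ?rough k)"
    by (rule ext) (rule shift_op_decomposition[OF one_minus_avg_poly[OF n]])
  then have "lnorm1 u \<le> lnorm1 ?smooth + lnorm1 ?rough"
    by (metis lnorm1_add_le summable_shift_op summable_Delta u)
  also have "lnorm1 ?smooth \<le> 2 ^ r * lnorm1 (shift_op (avg_poly n) u)"
    using lnorm1_shift_op_le[OF summable_shift_op[OF u]]
      coeff_l1_neumann_poly[OF coeff_l1_avg_poly] lnorm1_nonneg
    by (meson mult_right_mono order_trans)
  also have "lnorm1 ?rough \<le> real n ^ r * lnorm1 (Delta r u)"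
    using lnorm1_shift_op_le[OF summable_Delta[OF u]] lnorm1_nonneg
      order_trans[OF coeff_l1_power power_mono[OF coeff_l1_avg_antidiff_poly coeff_l1_nonneg]]
    by (meson mult_right_mono order_trans)
  finally show ?thesis by simp
qed

lemma abs_le_lnorm1_Delta:
  assumes r: "r \<ge> 1" and n: "n \<ge> 1" and u: "u summable_on UNIV"
  shows "\<bar>u k\<bar> \<le> 2 ^ r * lnorm1 u / real n + real n ^ (r - 1) * lnorm1 (Delta r u)"
  using abs_le_avg_poly_Delta[OF r n summable_Delta[OF u] abs_shift_op_avg_poly_le[OF u]]
  by simp

lemma abs_Delta_le_sup:
  assumes r: "r \<ge> 1" and n: "n \<ge> 1" and w: "\<And>j. \<bar>w j\<bar> \<le> M"
    and Dw: "Delta (Suc r) w summable_on UNIV"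
  shows "\<bar>Delta 1 w k\<bar> \<le> 2 ^ (r + 1) * M / real n + real n ^ (r - 1) * lnorm1 (Delta (Suc r) w)"
proof -
  have "\<bar>shift_op (avg_poly n) (Delta 1 w) j\<bar> \<le> 2 * M / real n" for j
    unfolding shift_op_avg_poly_Delta using w[of j] w[of "j + int n"]
    by (simp add: divide_right_mono)
  from abs_le_avg_poly_Delta[OF r n _ this, of k] show ?thesis
    unfolding Delta_Delta_1 using Dw by (simp add: algebra_simps)
qed

lemma abs_Delta_le_lnorm1:
  assumes r: "r \<ge> 1" and n: "n \<ge> 1" and w: "w summable_on UNIV"
  shows "\<bar>Delta 1 w k\<bar>
    \<le> 2 ^ (r + 1) * lnorm1 w / real n ^ 2 + 2 ^ r * real n ^ (r - 1) * lnorm1 (Delta (Suc r) w)"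
proof -
  have "\<bar>shift_op (avg_poly n * avg_poly n) (Delta 1 w) j\<bar> \<le> 2 * lnorm1 w / real n ^ 2" for j
  proof -
    have "shift_op (avg_poly n * avg_poly n) (Delta 1 w) j
        = (\<Sum>i<n. (w (j + int i + int n) - w (j + int i)) / real n) / real n"
      unfolding shift_op_mult shift_op_avg_poly_Delta by (simp add: shift_op_avg_poly algebra_simps)
    also have "\<dots> = ((\<Sum>i<n. w (j + int n + int i)) - (\<Sum>i<n. w (j + int i))) / real n ^ 2"
      by (simp add: sum_divide_distrib[symmetric] sum_subtractf power2_eq_square algebra_simps)
    finally have "shift_op (avg_poly n * avg_poly n) (Delta 1 w) j
        = ((\<Sum>i<n. w (j + int n + int i)) - (\<Sum>i<n. w (j + int i))) / real n ^ 2" .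
    moreover have "\<bar>(\<Sum>i<n. w (j + int n + int i)) - (\<Sum>i<n. w (j + int i))\<bar> \<le> 2 * lnorm1 w"
      using abs_sum_window_le_lnorm1[OF w, of "j + int n" n] abs_sum_window_le_lnorm1[OF w, of j n]
      by linarith
    ultimately show ?thesis by (simp add: divide_right_mono)
  qed
  from abs_le_avg_poly_sq_Delta[OF r n _ this, of k] show ?thesis
    unfolding Delta_Delta_1 using summable_Delta[OF w] by (simp add: algebra_simps)
qed

lemma lnorm1_Delta_le:
  assumes n: "n \<ge> 1" and w: "w summable_on UNIV"
  shows "lnorm1 (Delta 1 w)
    \<le> 2 ^ (r + 1) * lnorm1 w / real n + real n ^ r * lnorm1 (Delta (Suc r) w)"
proof -
  have "lnorm1 (shift_op (avg_poly n) (Delta 1 w)) = lnorm1 (\<lambda>j. w (j + int n) - w j) / real n"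
    unfolding shift_op_avg_poly_Delta
    using lnorm1_cmult[of "1 / real n" "\<lambda>j. w (j + int n) - w j"] by simp
  also have "\<dots> \<le> 2 * lnorm1 w / real n"
    using lnorm1_diff_le[OF summable_on_shift_int[OF w] w]
    by (simp add: lnorm1_shift divide_right_mono)
  finally have
    "2 ^ r * lnorm1 (shift_op (avg_poly n) (Delta 1 w)) \<le> 2 ^ r * (2 * lnorm1 w / real n)"
    by (rule mult_left_mono) simp
  then show ?thesis
    using lnorm1_le_avg_poly_Delta[OF n summable_Delta[OF w, of 1], of r]
    unfolding Delta_Delta_1 by (simp add: algebra_simps)
qed


section \<open>Optimising over the averaging length\<close>

lemma interpolation_inequality:
  fixes U X Y c a b :: real and s k :: nat
  assumes s: "1 \<le> s" "s \<le> k" and X: "X \<ge> 0" and Y: "Y \<ge> 0"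
    and c: "c \<ge> 0" and a: "a \<ge> 0" and b: "b \<ge> 0"
    and crude: "U \<le> c * X"
    and fine: "\<And>n. n \<ge> 1 \<Longrightarrow> U \<le> a * X / real n ^ s + b * real n ^ (k - s) * Y"
  shows "U \<le> (c + a * 2 ^ s + b) * X powr (1 - real s / real k) * Y powr (real s / real k)"
proof -
  define \<beta> where "\<beta> = real s / real k"
  have k: "real k > 0" using s by simp
  have \<beta>: "0 < \<beta>" "\<beta> \<le> 1" using s by (auto simp: \<beta>_def)
  have "X powr (1 - \<beta>) * Y powr \<beta> \<ge> 0" by simp
  then have mono:
    "d * (X powr (1 - \<beta>) * Y powr \<beta>) \<le> (c + a * 2 ^ s + b) * (X powr (1 - \<beta>) * Y powr \<beta>)"
    if "d \<le> c + a * 2 ^ s + b" for d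
    using that by (rule mult_right_mono[rotated])
  consider "X = 0" | "X > 0" "Y = 0" | "0 < X" "X \<le> Y" | "0 < Y" "Y < X"
    using X Y by fastforce
  then have "U \<le> (c + a * 2 ^ s + b) * (X powr (1 - \<beta>) * Y powr \<beta>)"
  proof cases
    case 1
    then show ?thesis using crude by simp
  next
    case 2
    have "U \<le> 0"
    proof (rule ccontr)
      assume "\<not> U \<le> 0"
      then have U: "U > 0" by simp
      obtain n :: nat where n: "max 1 (a * X / U) < real n"
        using reals_Archimedean2 by blast
      then have n1: "n \<ge> 1" by simp
      have "real n \<le> real n ^ s"
        using n1 s by (metis of_nat_le_iff of_nat_power power_increasing power_one_right)
      then have "a * X / real n ^ s \<le> a * X / real n"
        using n1 a X by (intro divide_left_mono) auto
      also have "\<dots> < U"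
        using n U n1 by (simp add: field_simps)
      finally show False using fine[OF n1] 2 by simp
    qed
    then show ?thesis using 2 by simp
  next
    case 3
    have "U \<le> c * (X powr (1 - \<beta>) * X powr \<beta>)"
      using crude 3 by (simp add: powr_add[symmetric])
    also have "\<dots> \<le> c * (X powr (1 - \<beta>) * Y powr \<beta>)"
      using 3 \<beta> c by (intro mult_left_mono powr_mono2) auto
    also have "\<dots> \<le> (c + a * 2 ^ s + b) * (X powr (1 - \<beta>) * Y powr \<beta>)"
      using a b by (intro mono) auto
    finally show ?thesis .
  next
    case 4
    \<comment> \<open>\<open>n \<approx> \<rho>\<close> balances the two terms of the fine bound.\<close>
    define \<rho> where "\<rho> = (X / Y) powr (1 / real k)"
    have \<rho>: "\<rho> \<ge> 1" unfolding \<rho>_def using 4 k by (intro ge_one_powr_ge_zero) auto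
    have \<rho>_power: "\<rho> ^ j = (X / Y) powr (real j / real k)" for j
      unfolding \<rho>_def using 4 by (simp add: powr_realpow[symmetric] powr_powr)
    define n where "n = nat \<lfloor>\<rho>\<rfloor>"
    have n1: "n \<ge> 1" using \<rho> unfolding n_def by linarith
    then have n: "n \<ge> 1" "real n \<le> \<rho>" "\<rho> \<le> 2 * real n" using \<rho> unfolding n_def by linarith+
    have "a * X / real n ^ s \<le> a * 2 ^ s * (X / \<rho> ^ s)"
    proof -
      have "\<rho> ^ s \<le> 2 ^ s * real n ^ s"
        using n \<rho> power_mono[of \<rho> "2 * real n" s] by (simp add: power_mult_distrib)
      then show ?thesis using n \<rho> a X by (auto simp: field_simps intro!: mult_left_mono)
    qed
    also have "X / \<rho> ^ s = X powr (1 - \<beta>) * Y powr \<beta>"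
      using 4 by (simp add: \<rho>_power \<beta>_def powr_divide powr_diff)
    finally have first: "a * X / real n ^ s \<le> a * 2 ^ s * (X powr (1 - \<beta>) * Y powr \<beta>)" .
    have "b * real n ^ (k - s) * Y \<le> b * (\<rho> ^ (k - s) * Y)"
      using n b 4 by (simp add: mult.assoc mult_left_mono power_mono)
    also have "\<rho> ^ (k - s) * Y = X powr (1 - \<beta>) * Y powr \<beta>"
      using 4 s by (simp add: \<rho>_power \<beta>_def diff_divide_distrib powr_divide powr_diff)
    finally have second: "b * real n ^ (k - s) * Y \<le> b * (X powr (1 - \<beta>) * Y powr \<beta>)" .
    have "U \<le> (a * 2 ^ s + b) * (X powr (1 - \<beta>) * Y powr \<beta>)"
      using fine[OF n(1)] first second by (simp add: algebra_simps)
    also have "\<dots> \<le> (c + a * 2 ^ s + b) * (X powr (1 - \<beta>) * Y powr \<beta>)"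
      using c by (intro mono) auto
    finally show ?thesis .
  qed
  then show ?thesis by (simp add: \<beta>_def mult.assoc)
qed

lemma interpolation_inequality_uniform:
  fixes U X Y :: "'a \<Rightarrow> 'b \<Rightarrow> real" and c a b :: real and s k :: nat
  assumes "1 \<le> s" "s \<le> k" "c > 0" "a \<ge> 0" "b \<ge> 0"
    and "\<And>x y. P x y \<Longrightarrow> X x y \<ge> 0" "\<And>x y. P x y \<Longrightarrow> Y x y \<ge> 0"
    and "\<And>x y. P x y \<Longrightarrow> U x y \<le> c * X x y"
    and "\<And>x y n. P x y \<Longrightarrow> n \<ge> 1 \<Longrightarrow>
      U x y \<le> a * X x y / real n ^ s + b * real n ^ (k - s) * Y x y"
  shows "\<exists>C>0. \<forall>x y. P x y \<longrightarrow>
    U x y \<le> C * X x y powr (1 - real s / real k) * Y x y powr (real s / real k)"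
  using assms
  by (intro exI[of _ "c + a * 2 ^ s + b"]) (auto intro!: interpolation_inequality add_pos_nonneg)


section \<open>Averaged distribution functions\<close>

lemma Fbar_eq_shift_op: "Fbar m f j = shift_op (avg_poly m) f (j + 1 - int m)"
proof -
  have "(\<Sum>i<m. f (j + 1 - int m + int i)) = (\<Sum>i<m. f (j + 1 - int m + int (m - Suc i)))"
    by (rule sum.nat_diff_reindex[symmetric])
  also have "\<dots> = (\<Sum>i<m. f (j - int i))"
    by (intro sum.cong) auto
  finally show ?thesis by (simp add: Fbar_def shift_op_avg_poly)
qed

lemma Delta_Fbar: "Delta n (Fbar m f) = Fbar m (Delta n f)"
proof (rule ext)
  show "Delta n (Fbar m f) k = Fbar m (Delta n f) k" for k
    by (induction n arbitrary: k)
      (simp_all add: Fbar_def sum_subtractf diff_divide_distrib algebra_simps)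
qed

lemma Fbar_diff: "Fbar m (\<lambda>j. f j - g j) j = Fbar m f j - Fbar m g j"
  by (simp add: Fbar_def sum_subtractf diff_divide_distrib)

lemma summable_Fbar: "f summable_on UNIV \<Longrightarrow> Fbar m f summable_on UNIV"
  using summable_on_shift_int[OF summable_shift_op, of f "avg_poly m" "1 - int m"]
  by (simp add: Fbar_eq_shift_op[abs_def] algebra_simps)

lemma lnorm1_Fbar_le: "f summable_on UNIV \<Longrightarrow> lnorm1 (Fbar m f) \<le> lnorm1 f"
  using lnorm1_shift[of "shift_op (avg_poly m) f" "1 - int m"]
    lnorm1_shift_op_le[of f "avg_poly m"] coeff_l1_avg_poly[of m] lnorm1_nonneg[of f]
  by (simp add: Fbar_eq_shift_op[abs_def] algebra_simps) (meson mult_left_le order_trans)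

lemma abs_Fbar_le:
  assumes "\<And>j. \<bar>f j\<bar> \<le> M"
  shows "\<bar>Fbar m f j\<bar> \<le> M"
proof -
  have "M \<ge> 0" using assms[of 0] by linarith
  then have "coeff_l1 (avg_poly m) * M \<le> M"
    using coeff_l1_avg_poly[of m] by (simp add: mult_left_le_one_le coeff_l1_nonneg)
  then show ?thesis
    unfolding Fbar_eq_shift_op by (rule order_trans[OF abs_shift_op_le_sup[OF assms]])
qed

lemma Delta_distfun: "Delta 1 (distfun p) = (\<lambda>j. pmf p (j + 1))"
proof (rule ext)
  fix j
  have "measure_pmf.prob p {..j + 1} = measure_pmf.prob p ({j + 1} \<union> {..j})"
    by (rule arg_cong[where f = "measure_pmf.prob p"]) auto
  also have "\<dots> = pmf p (j + 1) + measure_pmf.prob p {..j}"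
    by (subst measure_pmf.finite_measure_Union) (auto simp: measure_pmf_single)
  finally show "Delta 1 (distfun p) j = pmf p (j + 1)" by (simp add: distfun_def)
qed

lemma summable_pmf: "pmf p summable_on UNIV"
proof (rule nonneg_bdd_above_summable_on)
  show "bdd_above (sum (pmf p) ` {F. F \<subseteq> UNIV \<and> finite F})"
    by (rule bdd_aboveI2[where M = 1]) (auto simp: measure_measure_pmf_finite[symmetric])
qed auto

lemma summable_Delta_distfun: "Delta 1 (distfun p) summable_on UNIV"
  unfolding Delta_distfun by (rule summable_on_shift_int[OF summable_pmf])

definition avg_diff :: "nat \<Rightarrow> int pmf \<Rightarrow> int pmf \<Rightarrow> int \<Rightarrow> real" where
  "avg_diff m p q = (\<lambda>j. Fbar m (distfun p) j - Fbar m (distfun q) j)"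

lemma avg_diff_eq_Fbar: "avg_diff m p q = Fbar m (\<lambda>j. distfun p j - distfun q j)"
  by (simp add: avg_diff_def Fbar_diff fun_eq_iff)

lemma dloc_Fbar_eq:
  "dloc (Fbar m (distfun p)) (Fbar m (distfun q)) = lnorminf (Delta 1 (avg_diff m p q))"
  unfolding dloc_def avg_diff_def Delta_diff ..

lemma dTV_Fbar_eq:
  "dTV (Fbar m (distfun p)) (Fbar m (distfun q)) = lnorm1 (Delta 1 (avg_diff m p q)) / 2"
  unfolding dTV_def avg_diff_def Delta_diff ..

lemma dK_Fbar_eq: "dK (Fbar m (distfun p)) (Fbar m (distfun q)) = lnorminf (avg_diff m p q)"
  unfolding dK_def avg_diff_def ..

lemma summable_Delta_Fbar_distfun: "Delta (Suc n) (Fbar m (distfun p)) summable_on UNIV"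
  using summable_Fbar[OF summable_Delta[OF summable_Delta_distfun[of p]], of m n]
  by (simp only: Delta_Delta_1 Delta_Fbar)

lemma summable_Delta_avg_diff: "Delta (Suc n) (avg_diff m p q) summable_on UNIV"
  unfolding avg_diff_def Delta_diff by (intro summable_on_diff summable_Delta_Fbar_distfun)

lemma lnorm1_Delta_avg_diff_le_dTV:
  "lnorm1 (Delta 1 (avg_diff m p q)) \<le> 2 * dTV (distfun p) (distfun q)"
proof -
  have "lnorm1 (Fbar m (\<lambda>k. Delta 1 (distfun p) k - Delta 1 (distfun q) k))
      \<le> lnorm1 (\<lambda>k. Delta 1 (distfun p) k - Delta 1 (distfun q) k)"
    by (intro lnorm1_Fbar_le summable_on_diff summable_Delta_distfun)
  then show ?thesis unfolding avg_diff_eq_Fbar Delta_Fbar Delta_diff dTV_def by linarith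
qed

lemma lnorm1_Delta_Suc_avg_diff_le:
  "lnorm1 (Delta (Suc l) (avg_diff m p q)) \<le> smooth l m (distfun p) (distfun q)"
  unfolding smooth_def avg_diff_def Delta_diff Suc_eq_plus1[symmetric]
  by (intro lnorm1_diff_le summable_Delta_Fbar_distfun)

lemma abs_avg_diff_le_dK: "\<bar>avg_diff m p q j\<bar> \<le> dK (distfun p) (distfun q)"
proof -
  have "\<bar>distfun p k - distfun q k\<bar> \<le> 1" for k
    using measure_pmf.prob_le_1[of p "{..k}"] measure_pmf.prob_le_1[of q "{..k}"]
      measure_nonneg[of "measure_pmf p" "{..k}"] measure_nonneg[of "measure_pmf q" "{..k}"]
    unfolding distfun_def abs_le_iff by linarith
  then show ?thesis
    unfolding avg_diff_eq_Fbar dK_def by (intro abs_Fbar_le abs_le_lnorminf)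
qed

lemma summable_avg_diff:
  assumes "(\<lambda>i. \<bar>distfun p i - distfun q i\<bar>) summable_on UNIV"
  shows "avg_diff m p q summable_on UNIV"
    and "lnorm1 (avg_diff m p q) \<le> dW (distfun p) (distfun q)"
  using assms unfolding avg_diff_eq_Fbar dW_def abs_summable_on_real_iff
  by (simp_all add: summable_Fbar lnorm1_Fbar_le)

lemma dTV_nonneg: "dTV F G \<ge> 0"
  and dW_nonneg: "dW F G \<ge> 0"
  and smooth_nonneg: "smooth l m F G \<ge> 0"
  by (simp_all add: dTV_def dW_def smooth_def lnorm1_nonneg)

lemma dK_distfun_nonneg: "dK (distfun p) (distfun q) \<ge> 0"
  using abs_avg_diff_le_dK[of m p q 0] by linarith

lemma summable_Delta_1_avg_diff: "Delta 1 (avg_diff m p q) summable_on UNIV"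
  using summable_Delta_avg_diff[of 0 m p q] by simp

lemma abs_Delta_avg_diff_le_dTV:
  "\<bar>Delta 1 (avg_diff m p q) k\<bar> \<le> 2 * dTV (distfun p) (distfun q)"
  by (rule order_trans[OF abs_le_lnorm1 lnorm1_Delta_avg_diff_le_dTV])
    (rule summable_Delta_1_avg_diff)

lemma abs_Delta_avg_diff_le_dK:
  "\<bar>Delta 1 (avg_diff m p q) k\<bar> \<le> 2 * dK (distfun p) (distfun q)"
  using abs_avg_diff_le_dK[of m p q k] abs_avg_diff_le_dK[of m p q "k + 1"] by simp

lemma abs_Delta_avg_diff_le_dTV_smooth:
  assumes l: "l \<ge> 1" and n: "n \<ge> 1"
  shows "\<bar>Delta 1 (avg_diff m p q) k\<bar>
    \<le> 2 ^ (l + 1) * dTV (distfun p) (distfun q) / real n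
      + real n ^ (l - 1) * smooth l m (distfun p) (distfun q)"
proof -
  have "\<bar>Delta 1 (avg_diff m p q) k\<bar>
      \<le> 2 ^ l * lnorm1 (Delta 1 (avg_diff m p q)) / real n
        + real n ^ (l - 1) * lnorm1 (Delta (Suc l) (avg_diff m p q))"
    using abs_le_lnorm1_Delta[OF l n summable_Delta_1_avg_diff, of m p q k]
    by (simp only: Delta_Delta_1)
  also have "\<dots> \<le> 2 ^ l * (2 * dTV (distfun p) (distfun q)) / real n
        + real n ^ (l - 1) * smooth l m (distfun p) (distfun q)"
    by (intro add_mono mult_left_mono divide_right_mono lnorm1_Delta_avg_diff_le_dTV
        lnorm1_Delta_Suc_avg_diff_le) auto
  finally show ?thesis by (simp add: algebra_simps)
qed

lemma abs_Delta_avg_diff_le_dK_smooth: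
  assumes l: "l \<ge> 1" and n: "n \<ge> 1"
  shows "\<bar>Delta 1 (avg_diff m p q) k\<bar>
    \<le> 2 ^ (l + 1) * dK (distfun p) (distfun q) / real n
      + real n ^ (l - 1) * smooth l m (distfun p) (distfun q)"
proof -
  have "\<bar>Delta 1 (avg_diff m p q) k\<bar>
      \<le> 2 ^ (l + 1) * dK (distfun p) (distfun q) / real n
        + real n ^ (l - 1) * lnorm1 (Delta (Suc l) (avg_diff m p q))"
    using abs_avg_diff_le_dK by (intro abs_Delta_le_sup[OF l n _ summable_Delta_avg_diff])
  also have "\<dots> \<le> 2 ^ (l + 1) * dK (distfun p) (distfun q) / real n
        + real n ^ (l - 1) * smooth l m (distfun p) (distfun q)"
    by (intro add_mono mult_left_mono lnorm1_Delta_Suc_avg_diff_le) auto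
  finally show ?thesis .
qed

context
  fixes p q :: "int pmf"
  assumes dW_summable: "(\<lambda>i. \<bar>distfun p i - distfun q i\<bar>) summable_on UNIV"
begin

lemma abs_avg_diff_le_dW: "\<bar>avg_diff m p q k\<bar> \<le> dW (distfun p) (distfun q)"
  using abs_le_lnorm1[OF summable_avg_diff(1)[OF dW_summable]] summable_avg_diff(2)[OF dW_summable]
  by (rule order_trans)

lemma lnorm1_Delta_avg_diff_le_dW:
  "lnorm1 (Delta 1 (avg_diff m p q)) \<le> 2 * dW (distfun p) (distfun q)"
  using lnorm1_Delta_le_twice[OF summable_avg_diff(1)[OF dW_summable, where m = m]]
    summable_avg_diff(2)[OF dW_summable, where m = m] by linarith

lemma dTV_Fbar_le_dW: "dTV (Fbar m (distfun p)) (Fbar m (distfun q)) \<le> dW (distfun p) (distfun q)"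
  using lnorm1_Delta_avg_diff_le_dW[of m] unfolding dTV_Fbar_eq by linarith

lemma abs_Delta_avg_diff_le_dW: "\<bar>Delta 1 (avg_diff m p q) k\<bar> \<le> 2 * dW (distfun p) (distfun q)"
  by (rule order_trans[OF abs_le_lnorm1 lnorm1_Delta_avg_diff_le_dW])
    (rule summable_Delta_1_avg_diff)

lemma abs_Delta_avg_diff_le_dW_smooth:
  assumes l: "l \<ge> 1" and n: "n \<ge> 1"
  shows "\<bar>Delta 1 (avg_diff m p q) k\<bar>
    \<le> 2 ^ (l + 1) * dW (distfun p) (distfun q) / real n ^ 2
      + 2 ^ l * real n ^ (l - 1) * smooth l m (distfun p) (distfun q)"
proof -
  have "\<bar>Delta 1 (avg_diff m p q) k\<bar>
      \<le> 2 ^ (l + 1) * lnorm1 (avg_diff m p q) / real n ^ 2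
        + 2 ^ l * real n ^ (l - 1) * lnorm1 (Delta (Suc l) (avg_diff m p q))"
    by (rule abs_Delta_le_lnorm1[OF l n summable_avg_diff(1)[OF dW_summable]])
  also have "\<dots> \<le> 2 ^ (l + 1) * dW (distfun p) (distfun q) / real n ^ 2
        + 2 ^ l * real n ^ (l - 1) * smooth l m (distfun p) (distfun q)"
    by (intro add_mono mult_left_mono divide_right_mono summable_avg_diff(2)[OF dW_summable]
        lnorm1_Delta_Suc_avg_diff_le) auto
  finally show ?thesis .
qed

lemma dTV_Fbar_le_dW_smooth:
  assumes n: "n \<ge> 1"
  shows "dTV (Fbar m (distfun p)) (Fbar m (distfun q))
    \<le> 2 ^ l * dW (distfun p) (distfun q) / real n
      + real n ^ l * smooth l m (distfun p) (distfun q)"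
proof -
  have "lnorm1 (Delta 1 (avg_diff m p q))
      \<le> 2 ^ (l + 1) * lnorm1 (avg_diff m p q) / real n
        + real n ^ l * lnorm1 (Delta (Suc l) (avg_diff m p q))"
    by (rule lnorm1_Delta_le[OF n summable_avg_diff(1)[OF dW_summable]])
  also have "\<dots> \<le> 2 ^ (l + 1) * dW (distfun p) (distfun q) / real n
        + real n ^ l * smooth l m (distfun p) (distfun q)"
    by (intro add_mono mult_left_mono divide_right_mono summable_avg_diff(2)[OF dW_summable]
        lnorm1_Delta_Suc_avg_diff_le) auto
  finally show ?thesis
    unfolding dTV_Fbar_eq
    using mult_nonneg_nonneg[OF zero_le_power[of "real n" l]
        smooth_nonneg[of l m "distfun p" "distfun q"]]
    by (simp add: field_simps)
qed

lemma abs_avg_diff_le_dW_smooth: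
  assumes n: "n \<ge> 1"
  shows "\<bar>avg_diff m p q k\<bar>
    \<le> 2 ^ (l + 1) * dW (distfun p) (distfun q) / real n
      + real n ^ l * smooth l m (distfun p) (distfun q)"
proof -
  have "\<bar>avg_diff m p q k\<bar>
      \<le> 2 ^ (l + 1) * lnorm1 (avg_diff m p q) / real n
        + real n ^ l * lnorm1 (Delta (Suc l) (avg_diff m p q))"
    using abs_le_lnorm1_Delta[OF _ n summable_avg_diff(1)[OF dW_summable], where r = "Suc l" and k = k]
    by simp
  also have "\<dots> \<le> 2 ^ (l + 1) * dW (distfun p) (distfun q) / real n
        + real n ^ l * smooth l m (distfun p) (distfun q)"
    by (intro add_mono mult_left_mono divide_right_mono summable_avg_diff(2)[OF dW_summable]
        lnorm1_Delta_Suc_avg_diff_le) auto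
  finally show ?thesis .
qed

end

lemma dloc_Fbar_interpolation_dTV:
  assumes l: "l \<ge> 1"
  shows "\<exists>C>0. \<forall>(p::int pmf) (q::int pmf).
       dloc (Fbar m (distfun p)) (Fbar m (distfun q))
         \<le> C * (dTV (distfun p) (distfun q) powr (1 - 1 / real l))
             * smooth l m (distfun p) (distfun q) powr (1 / real l)"
  by (rule interpolation_inequality_uniform[where P = "\<lambda>_ _. True" and s = 1 and
        c = 2 and a = "2 ^ (l + 1)" and b = 1, simplified])
    (use l abs_Delta_avg_diff_le_dTV_smooth[OF l] abs_Delta_avg_diff_le_dTV in
      \<open>auto simp: dTV_nonneg smooth_nonneg dloc_Fbar_eq intro!: lnorminf_le\<close>)

lemma dloc_Fbar_interpolation_dK:
  assumes l: "l \<ge> 1"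
  shows "\<exists>C>0. \<forall>(p::int pmf) (q::int pmf).
       dloc (Fbar m (distfun p)) (Fbar m (distfun q))
         \<le> C * (dK (distfun p) (distfun q) powr (1 - 1 / real l))
             * smooth l m (distfun p) (distfun q) powr (1 / real l)"
  by (rule interpolation_inequality_uniform[where P = "\<lambda>_ _. True" and s = 1 and
        c = 2 and a = "2 ^ (l + 1)" and b = 1, simplified])
    (use l abs_Delta_avg_diff_le_dK_smooth[OF l] abs_Delta_avg_diff_le_dK in
      \<open>auto simp: dK_distfun_nonneg smooth_nonneg dloc_Fbar_eq intro!: lnorminf_le\<close>)

lemma dloc_Fbar_interpolation_dW:
  assumes l: "l \<ge> 1"
  shows "\<exists>C>0. \<forall>(p::int pmf) (q::int pmf).
       (\<lambda>i. \<bar>distfun p i - distfun q i\<bar>) summable_on UNIV \<longrightarrow>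
       dloc (Fbar m (distfun p)) (Fbar m (distfun q))
         \<le> C * (dW (distfun p) (distfun q) powr (1 - 2 / real (l + 1)))
             * smooth l m (distfun p) (distfun q) powr (2 / real (l + 1))"
  by (rule interpolation_inequality_uniform[where s = 2 and
        c = 2 and a = "2 ^ (l + 1)" and b = "2 ^ l", simplified])
    (use l abs_Delta_avg_diff_le_dW_smooth[OF _ l] abs_Delta_avg_diff_le_dW in
      \<open>auto simp: dW_nonneg smooth_nonneg dloc_Fbar_eq intro!: lnorminf_le\<close>)

lemma dTV_Fbar_interpolation_dW:
  shows "\<exists>C>0. \<forall>(p::int pmf) (q::int pmf).
       (\<lambda>i. \<bar>distfun p i - distfun q i\<bar>) summable_on UNIV \<longrightarrow>
       dTV (Fbar m (distfun p)) (Fbar m (distfun q))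
         \<le> C * (dW (distfun p) (distfun q) powr (1 - 1 / real (l + 1)))
             * smooth l m (distfun p) (distfun q) powr (1 / real (l + 1))"
  by (rule interpolation_inequality_uniform[where s = 1 and
        c = 1 and a = "2 ^ l" and b = 1, simplified])
    (use dTV_Fbar_le_dW_smooth dTV_Fbar_le_dW in \<open>auto simp: dW_nonneg smooth_nonneg\<close>)

lemma dK_Fbar_interpolation_dW:
  shows "\<exists>C>0. \<forall>(p::int pmf) (q::int pmf).
       (\<lambda>i. \<bar>distfun p i - distfun q i\<bar>) summable_on UNIV \<longrightarrow>
       dK (Fbar m (distfun p)) (Fbar m (distfun q))
         \<le> C * (dW (distfun p) (distfun q) powr (1 - 1 / real (l + 1)))
             * smooth l m (distfun p) (distfun q) powr (1 / real (l + 1))"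
  by (rule interpolation_inequality_uniform[where s = 1 and
        c = 1 and a = "2 ^ (l + 1)" and b = 1, simplified])
    (use abs_avg_diff_le_dW_smooth abs_avg_diff_le_dW in
      \<open>auto simp: dW_nonneg smooth_nonneg dK_Fbar_eq intro!: lnorminf_le\<close>)

theorem theorem2:
  fixes l m :: nat
  assumes "l \<ge> 1" and "m \<ge> 1"
  shows
   "(\<exists>C>0. \<forall>(p::int pmf) (q::int pmf).
       dloc (Fbar m (distfun p)) (Fbar m (distfun q))
         \<le> C * (dTV (distfun p) (distfun q) powr (1 - 1 / real l))
             * smooth l m (distfun p) (distfun q) powr (1 / real l))
  \<and> (\<exists>C>0. \<forall>(p::int pmf) (q::int pmf).
       dloc (Fbar m (distfun p)) (Fbar m (distfun q))
         \<le> C * (dK (distfun p) (distfun q) powr (1 - 1 / real l))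
             * smooth l m (distfun p) (distfun q) powr (1 / real l))
  \<and> (\<exists>C>0. \<forall>(p::int pmf) (q::int pmf).
       (\<lambda>i. \<bar>distfun p i - distfun q i\<bar>) summable_on UNIV \<longrightarrow>
       dloc (Fbar m (distfun p)) (Fbar m (distfun q))
         \<le> C * (dW (distfun p) (distfun q) powr (1 - 2 / real (l + 1)))
             * smooth l m (distfun p) (distfun q) powr (2 / real (l + 1)))
  \<and> (\<exists>C>0. \<forall>(p::int pmf) (q::int pmf).
       (\<lambda>i. \<bar>distfun p i - distfun q i\<bar>) summable_on UNIV \<longrightarrow>
       dTV (Fbar m (distfun p)) (Fbar m (distfun q))
         \<le> C * (dW (distfun p) (distfun q) powr (1 - 1 / real (l + 1)))
             * smooth l m (distfun p) (distfun q) powr (1 / real (l + 1)))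
  \<and> (\<exists>C>0. \<forall>(p::int pmf) (q::int pmf).
       (\<lambda>i. \<bar>distfun p i - distfun q i\<bar>) summable_on UNIV \<longrightarrow>
       dK (Fbar m (distfun p)) (Fbar m (distfun q))
         \<le> C * (dW (distfun p) (distfun q) powr (1 - 1 / real (l + 1)))
             * smooth l m (distfun p) (distfun q) powr (1 / real (l + 1)))"
  using dloc_Fbar_interpolation_dTV[OF assms(1)] dloc_Fbar_interpolation_dK[OF assms(1)]
    dloc_Fbar_interpolation_dW[OF assms(1)] dTV_Fbar_interpolation_dW dK_Fbar_interpolation_dW
  by blast

end
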